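(* Let $X,Y$ be independent discrete-continuous random variables with discrete parts $X_D,Y_D$ and continuous parts $X_c,Y_c$, and let $Z=X+Y$ with continuous part $Z_c$. Then $h(Z_c)\ge\min\{h(X_c),h(Y_c)\}$.
   Context: A random variable $X$ is discrete-continuous if there is a countable set $\mathcal D$ with $0<\Pr(X\in\mathcal D)<1$ such that the conditional law of $X$ given $X\notin\mathcal D$ is absolutely continuous (this conditional variable is the continuous part $X_c$) and given $X\in\mathcal D$ is discrete (the discrete part $X_D$). For independent such $X,Y$, $Z=X+Y$ is discrete-continuous with discrete part $X_D+Y_D$ (probability $\Pr(X\in\mathcal D_X)\Pr(Y\in\mathcal D_Y)$) and continuous part the mixture of $X_D+Y_c$, $X_c+Y_D$, $X_c+Y_c$ with weights proportional to the corresponding products of probabilities. $h$ denotes differential entropy. *)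

theory Defs
  imports "HOL-Probability.Probability"
begin

definition cond_law :: "'a measure \<Rightarrow> ('a \<Rightarrow> real) \<Rightarrow> real set \<Rightarrow> real measure" where
  "cond_law M X A = uniform_measure (distr M borel X) A"

definition discrete_measure :: "real measure \<Rightarrow> bool" where
  "discrete_measure \<mu> \<longleftrightarrow> (\<exists>S. countable S \<and> emeasure \<mu> (UNIV - S) = 0)"

definition discrete_continuous :: "'a measure \<Rightarrow> ('a \<Rightarrow> real) \<Rightarrow> real set \<Rightarrow> bool" where
  "discrete_continuous M X D \<longleftrightarrow>
     X \<in> borel_measurable M \<and> countable D \<and>
     0 < measure M (X -` D \<inter> space M) \<and> measure M (X -` D \<inter> space M) < 1 \<and>
     absolutely_continuous lborel (cond_law M X (UNIV - D)) \<and>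
     discrete_measure (cond_law M X D)"

definition cont_part :: "'a measure \<Rightarrow> ('a \<Rightarrow> real) \<Rightarrow> real set \<Rightarrow> real measure" where
  "cont_part M X D = cond_law M X (UNIV - D)"

definition disc_part :: "'a measure \<Rightarrow> ('a \<Rightarrow> real) \<Rightarrow> real set \<Rightarrow> real measure" where
  "disc_part M X D = cond_law M X D"

definition dens :: "real measure \<Rightarrow> real \<Rightarrow> real" where
  "dens \<mu> x = enn2real (RN_deriv lborel \<mu> x)"

definition diff_entropy :: "real measure \<Rightarrow> real" where
  "diff_entropy \<mu> = - (\<integral>x. dens \<mu> x * ln (dens \<mu> x) \<partial>lborel)"

definition finite_diff_entropy :: "real measure \<Rightarrow> bool" where
  "finite_diff_entropy \<mu> \<longleftrightarrow> integrable lborel (\<lambda>x. dens \<mu> x * ln (dens \<mu> x))"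

definition sumset :: "real set \<Rightarrow> real set \<Rightarrow> real set" where
  "sumset A B = {a + b | a b. a \<in> A \<and> b \<in> B}"

end

theory Submission
  imports Defs
begin

(* Let S = DX + DY and let f be the density of Z_c. Up to a null set, {Z \<notin> S} is the disjoint
   union of {Y \<notin> DY} and {X \<notin> DX, Y \<in> DY}: a continuous summand almost surely moves the sum
   off the countable set S. Hence P(Z \<notin> S) h(Z_c) = E[-ln f(Z); Z \<notin> S] splits into two
   expectations. Conditioning on the other summand v, each one is a cross entropy of Y_c
   (resp. X_c) against the translate f(. + v), which has total mass 1, so Gibbs' inequality
   bounds it below by h(Y_c) (resp. h(X_c)). Thus P(Z \<notin> S) h(Z_c) dominates
   P(Y \<notin> DY) h(Y_c) + P(X \<notin> DX) P(Y \<in> DY) h(X_c), a combination of h(X_c) and h(Y_c)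
   with total weight P(Z \<notin> S). *)

section \<open>Densities and differential entropy\<close>

lemma dens_nonneg [simp]: "0 \<le> dens \<mu> x"
  by (simp add: dens_def)

lemma borel_measurable_dens [measurable]: "dens \<mu> \<in> borel_measurable borel"
  unfolding dens_def by measurable

lemma density_dens:
  assumes "finite_measure \<mu>" "sets \<mu> = sets borel" "absolutely_continuous lborel \<mu>"
  shows "density lborel (\<lambda>x. ennreal (dens \<mu> x)) = \<mu>"
proof -
  have sets: "sets \<mu> = sets lborel" using assms(2) by simp
  have "AE x in lborel. RN_deriv lborel \<mu> x \<noteq> \<infinity>"
    using assms(1,3) sets
    by (intro sigma_finite_measure.RN_deriv_finite sigma_finite_lborel
        finite_measure.sigma_finite_measure)
  then have "density lborel (\<lambda>x. ennreal (dens \<mu> x)) = density lborel (RN_deriv lborel \<mu>)"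
    by (intro density_cong) (auto simp: dens_def less_top)
  also have "\<dots> = \<mu>"
    using assms(3) sets by (rule sigma_finite_measure.density_RN_deriv[OF sigma_finite_lborel])
  finally show ?thesis .
qed


lemma
  assumes "finite_measure \<mu>" "sets \<mu> = sets borel" "absolutely_continuous lborel \<mu>"
    and [measurable]: "h \<in> borel_measurable borel"
  shows integrable_dens_iff: "integrable \<mu> h \<longleftrightarrow> integrable lborel (\<lambda>x. dens \<mu> x * h x)"
    and integral_dens: "(\<integral>x. h x \<partial>\<mu>) = (\<integral>x. dens \<mu> x * h x \<partial>lborel)"
proof -
  let ?f = "density lborel (\<lambda>x. ennreal (dens \<mu> x))"
  have "integrable ?f h \<longleftrightarrow> integrable lborel (\<lambda>x. dens \<mu> x * h x)"
    "(\<integral>x. h x \<partial>?f) = (\<integral>x. dens \<mu> x * h x \<partial>lborel)"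
    by (simp_all add: integrable_density integral_density)
  then show "integrable \<mu> h \<longleftrightarrow> integrable lborel (\<lambda>x. dens \<mu> x * h x)"
    "(\<integral>x. h x \<partial>\<mu>) = (\<integral>x. dens \<mu> x * h x \<partial>lborel)"
    by (simp_all only: density_dens[OF assms(1-3)])
qed

lemma AE_dens_iff:
  assumes "finite_measure \<mu>" "sets \<mu> = sets borel" "absolutely_continuous lborel \<mu>"
    and [measurable]: "Measurable.pred borel P"
  shows "(AE x in \<mu>. P x) \<longleftrightarrow> (AE x in lborel. 0 < dens \<mu> x \<longrightarrow> P x)"
proof -
  have "(AE x in density lborel (\<lambda>x. ennreal (dens \<mu> x)). P x) \<longleftrightarrow> (AE x in lborel. 0 < dens \<mu> x \<longrightarrow> P x)"
    by (simp add: AE_density)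
  then show ?thesis by (simp only: density_dens[OF assms(1-3)])
qed

lemma
  assumes "prob_space \<mu>" "sets \<mu> = sets borel" "absolutely_continuous lborel \<mu>"
  shows integrable_dens: "integrable lborel (dens \<mu>)"
    and integral_dens_eq_1: "(\<integral>x. dens \<mu> x \<partial>lborel) = 1"
proof -
  interpret prob_space \<mu> by fact
  have "integrable \<mu> (\<lambda>_. 1::real)" "(\<integral>_. 1 \<partial>\<mu>) = (1::real)" by (simp_all add: prob_space)
  moreover note integrable_dens_iff[OF finite_measure_axioms assms(2,3), of "\<lambda>_. 1"]
    integral_dens[OF finite_measure_axioms assms(2,3), of "\<lambda>_. 1"]
  ultimately show "integrable lborel (dens \<mu>)" "(\<integral>x. dens \<mu> x \<partial>lborel) = 1"
    by simp_all
qed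

lemma mult_ln_le_mult_ln_add:
  fixes a b :: real
  assumes "0 \<le> a" "0 \<le> b" "0 < a \<longrightarrow> 0 < b"
  shows "a * ln b \<le> a * ln a + (b - a)"
proof (cases "a = 0")
  case False
  then have a: "0 < a" and b: "0 < b" using assms by auto
  have "a * ln (b / a) \<le> a * (b / a - 1)"
    using ln_le_minus_one[of "b / a"] a b by (intro mult_left_mono) auto
  then show ?thesis using a b by (simp add: ln_div algebra_simps)
qed (use assms in simp)

lemma diff_entropy_le_cross_entropy:
  assumes \<mu>: "prob_space \<mu>" "sets \<mu> = sets borel" "absolutely_continuous lborel \<mu>"
    and fin: "finite_diff_entropy \<mu>"
    and [measurable]: "\<psi> \<in> borel_measurable borel"
    and \<psi>: "\<And>x. 0 \<le> \<psi> x" "integrable lborel \<psi>" "(\<integral>x. \<psi> x \<partial>lborel) \<le> 1"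
    and int: "integrable \<mu> (\<lambda>x. - ln (\<psi> x))" and pos: "AE x in \<mu>. 0 < \<psi> x"
  shows "diff_entropy \<mu> \<le> (\<integral>x. - ln (\<psi> x) \<partial>\<mu>)"
proof -
  interpret prob_space \<mu> by fact
  note dens = finite_measure_axioms \<mu>(2,3)
  let ?g = "dens \<mu>"
  have g: "integrable lborel ?g" "(\<integral>x. ?g x \<partial>lborel) = 1"
    using integrable_dens[OF \<mu>] integral_dens_eq_1[OF \<mu>] by auto
  have ent: "integrable lborel (\<lambda>x. ?g x * ln (?g x))"
    using fin by (simp add: finite_diff_entropy_def)
  have cross: "integrable lborel (\<lambda>x. ?g x * ln (\<psi> x))"
    using int integrable_dens_iff[OF dens, of "\<lambda>x. - ln (\<psi> x)"] by simp
  have "AE x in lborel. 0 < ?g x \<longrightarrow> 0 < \<psi> x"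
    using pos AE_dens_iff[OF dens] by simp
  then have "(\<integral>x. ?g x * ln (\<psi> x) \<partial>lborel) \<le> (\<integral>x. ?g x * ln (?g x) + (\<psi> x - ?g x) \<partial>lborel)"
    by (intro integral_mono_AE) (auto intro!: mult_ln_le_mult_ln_add cross ent \<psi> g elim!: AE_mp)
  also have "\<dots> = (\<integral>x. ?g x * ln (?g x) \<partial>lborel) + ((\<integral>x. \<psi> x \<partial>lborel) - 1)"
    using ent \<psi> g by simp
  finally show ?thesis
    using \<psi>(3) integral_dens[OF dens, of "\<lambda>x. - ln (\<psi> x)"] by (simp add: diff_entropy_def)
qed

lemma
  assumes \<mu>: "prob_space \<mu>" "sets \<mu> = sets borel" "absolutely_continuous lborel \<mu>"
  shows AE_dens_pos: "AE x in \<mu>. 0 < dens \<mu> x"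
    and integrable_neg_ln_dens: "finite_diff_entropy \<mu> \<Longrightarrow> integrable \<mu> (\<lambda>x. - ln (dens \<mu> x))"
    and integral_neg_ln_dens: "(\<integral>x. - ln (dens \<mu> x) \<partial>\<mu>) = diff_entropy \<mu>"
proof -
  interpret prob_space \<mu> by fact
  note dens = finite_measure_axioms \<mu>(2,3)
  show "AE x in \<mu>. 0 < dens \<mu> x"
    by (simp add: AE_dens_iff[OF dens])
  show "finite_diff_entropy \<mu> \<Longrightarrow> integrable \<mu> (\<lambda>x. - ln (dens \<mu> x))"
    by (simp add: integrable_dens_iff[OF dens] finite_diff_entropy_def)
  show "(\<integral>x. - ln (dens \<mu> x) \<partial>\<mu>) = diff_entropy \<mu>"
    by (simp add: integral_dens[OF dens] diff_entropy_def)
qed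

section \<open>Continuous parts\<close>

lemma (in finite_measure)
  fixes h :: "'a \<Rightarrow> real"
  assumes [measurable]: "A \<in> sets M" "h \<in> borel_measurable M" and A: "0 < measure M A"
  shows integrable_uniform_measure_iff:
      "integrable (uniform_measure M A) h \<longleftrightarrow> integrable M (\<lambda>x. h x * indicator A x)"
    and integral_uniform_measure:
      "(\<integral>x. h x * indicator A x \<partial>M) = measure M A * (\<integral>x. h x \<partial>uniform_measure M A)"
proof -
  have "1 / ennreal (measure M A) = ennreal (1 / measure M A)"
    using A divide_ennreal[of 1 "measure M A"] by simp
  then have "uniform_measure M A = density M (\<lambda>x. ennreal (indicator A x / measure M A))"
    unfolding uniform_measure_def using A
    by (intro density_cong) (auto simp: emeasure_eq_measure split: split_indicator)
  moreover have "integrable M (\<lambda>x. h x * indicator A x / measure M A) \<longleftrightarrow>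
      integrable M (\<lambda>x. h x * indicator A x)"
    using A integrable_mult_right_iff[of M "\<lambda>x. h x * indicator A x" "1 / measure M A"] by simp
  ultimately show "integrable (uniform_measure M A) h \<longleftrightarrow> integrable M (\<lambda>x. h x * indicator A x)"
    "(\<integral>x. h x * indicator A x \<partial>M) = measure M A * (\<integral>x. h x \<partial>uniform_measure M A)"
    using A by (simp_all add: integrable_density integral_density mult.commute)
qed

lemma sets_cont_part [simp, measurable_cong]: "sets (cont_part M U D) = sets borel"
  by (simp add: cont_part_def cond_law_def)

context prob_space
begin

lemma prob_space_cont_part:
  assumes [measurable]: "random_variable borel U" "D \<in> sets borel"
    and pos: "0 < prob (U -` (UNIV - D) \<inter> space M)"
  shows "prob_space (cont_part M U D)"
proof -
  interpret U: prob_space "distr M borel U" by (rule prob_space_distr) simp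
  show ?thesis
    unfolding cont_part_def cond_law_def using pos
    by (intro prob_space_uniform_measure) (auto simp: U.emeasure_eq_measure measure_distr)
qed

lemma
  fixes U :: "'a \<Rightarrow> real" and h :: "real \<Rightarrow> real"
  assumes [measurable]: "random_variable borel U" "D \<in> sets borel" "h \<in> borel_measurable borel"
    and pos: "0 < prob (U -` (UNIV - D) \<inter> space M)"
  shows integrable_cont_part_iff: "integrable (cont_part M U D) h \<longleftrightarrow>
      integrable M (\<lambda>\<omega>. h (U \<omega>) * indicator (UNIV - D) (U \<omega>))"
    and integral_cont_part: "(\<integral>\<omega>. h (U \<omega>) * indicator (UNIV - D) (U \<omega>) \<partial>M)
      = prob (U -` (UNIV - D) \<inter> space M) * (\<integral>x. h x \<partial>cont_part M U D)"
proof -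
  interpret U: prob_space "distr M borel U" by (rule prob_space_distr) simp
  have m: "0 < measure (distr M borel U) (UNIV - D)"
    using pos by (simp add: measure_distr)
  note uniform = U.integrable_uniform_measure_iff[OF _ _ m] U.integral_uniform_measure[OF _ _ m]
  show "integrable (cont_part M U D) h \<longleftrightarrow>
      integrable M (\<lambda>\<omega>. h (U \<omega>) * indicator (UNIV - D) (U \<omega>))"
    using uniform(1)[of h] by (simp add: cont_part_def cond_law_def integrable_distr_eq)
  show "(\<integral>\<omega>. h (U \<omega>) * indicator (UNIV - D) (U \<omega>) \<partial>M)
      = prob (U -` (UNIV - D) \<inter> space M) * (\<integral>x. h x \<partial>cont_part M U D)"
    using uniform(2)[of h] by (simp add: cont_part_def cond_law_def integral_distr measure_distr)
qed

lemma AE_cont_part_iff: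
  fixes U :: "'a \<Rightarrow> real"
  assumes [measurable]: "random_variable borel U" "D \<in> sets borel" "Measurable.pred borel P"
    and pos: "0 < prob (U -` (UNIV - D) \<inter> space M)"
  shows "(AE x in cont_part M U D. P x) \<longleftrightarrow> (AE \<omega> in M. U \<omega> \<notin> D \<longrightarrow> P (U \<omega>))"
proof -
  interpret U: prob_space "distr M borel U" by (rule prob_space_distr) simp
  have "emeasure (distr M borel U) (UNIV - D) \<noteq> 0"
    using pos by (simp add: U.emeasure_eq_measure measure_distr)
  then have "(AE x in cont_part M U D. P x) \<longleftrightarrow> (AE x in distr M borel U. x \<in> UNIV - D \<longrightarrow> P x)"
    unfolding cont_part_def cond_law_def by (intro AE_uniform_measure) (auto simp: less_top[symmetric])
  then show ?thesis
    by (simp add: AE_distr_iff)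
qed

lemma
  fixes U :: "'a \<Rightarrow> real"
  assumes [measurable]: "random_variable borel U" "D \<in> sets borel"
    and pos: "0 < prob (U -` (UNIV - D) \<inter> space M)"
    and ac: "absolutely_continuous lborel (cont_part M U D)"
  shows AE_dens_cont_part_pos: "AE \<omega> in M. U \<omega> \<notin> D \<longrightarrow> 0 < dens (cont_part M U D) (U \<omega>)"
    and integrable_neg_ln_dens_cont_part: "finite_diff_entropy (cont_part M U D) \<Longrightarrow>
      integrable M (\<lambda>\<omega>. - ln (dens (cont_part M U D) (U \<omega>)) * indicator (UNIV - D) (U \<omega>))"
    and integral_neg_ln_dens_cont_part:
      "(\<integral>\<omega>. - ln (dens (cont_part M U D) (U \<omega>)) * indicator (UNIV - D) (U \<omega>) \<partial>M)
        = prob (U -` (UNIV - D) \<inter> space M) * diff_entropy (cont_part M U D)"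
proof -
  let ?\<nu> = "cont_part M U D"
  have \<nu>: "prob_space ?\<nu>" "sets ?\<nu> = sets borel" "absolutely_continuous lborel ?\<nu>"
    using prob_space_cont_part[OF assms(1-3)] ac by simp_all
  show "AE \<omega> in M. U \<omega> \<notin> D \<longrightarrow> 0 < dens ?\<nu> (U \<omega>)"
    using AE_dens_pos[OF \<nu>] AE_cont_part_iff[OF assms(1,2) _ pos, of "\<lambda>x. 0 < dens ?\<nu> x"] by simp
  show "finite_diff_entropy ?\<nu> \<Longrightarrow>
      integrable M (\<lambda>\<omega>. - ln (dens ?\<nu> (U \<omega>)) * indicator (UNIV - D) (U \<omega>))"
    using integrable_neg_ln_dens[OF \<nu>] integrable_cont_part_iff[OF assms(1,2) _ pos] by simp
  show "(\<integral>\<omega>. - ln (dens ?\<nu> (U \<omega>)) * indicator (UNIV - D) (U \<omega>) \<partial>M)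
        = prob (U -` (UNIV - D) \<inter> space M) * diff_entropy ?\<nu>"
    using integral_neg_ln_dens[OF \<nu>]
      integral_cont_part[OF assms(1,2) _ pos, of "\<lambda>x. - ln (dens ?\<nu> x)"] by simp
qed

lemma cont_part_entropy_le_integral_shift:
  fixes U :: "'a \<Rightarrow> real" and f :: "real \<Rightarrow> real"
  assumes [measurable]: "random_variable borel U" "D \<in> sets borel"
    and pos: "0 < prob (U -` (UNIV - D) \<inter> space M)"
    and ac: "absolutely_continuous lborel (cont_part M U D)"
    and fin: "finite_diff_entropy (cont_part M U D)"
    and [measurable]: "f \<in> borel_measurable borel"
    and f: "\<And>x. 0 \<le> f x" "integrable lborel f" "(\<integral>x. f x \<partial>lborel) \<le> 1"
    and int: "integrable M (\<lambda>\<omega>. - ln (f (U \<omega> + v)) * indicator (UNIV - D) (U \<omega>))"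
    and f_pos: "AE \<omega> in M. U \<omega> \<notin> D \<longrightarrow> 0 < f (U \<omega> + v)"
  shows "prob (U -` (UNIV - D) \<inter> space M) * diff_entropy (cont_part M U D)
    \<le> (\<integral>\<omega>. - ln (f (U \<omega> + v)) * indicator (UNIV - D) (U \<omega>) \<partial>M)"
proof -
  let ?\<nu> = "cont_part M U D"
  have \<nu>: "prob_space ?\<nu>" "sets ?\<nu> = sets borel" "absolutely_continuous lborel ?\<nu>"
    using prob_space_cont_part[OF assms(1-3)] ac by simp_all
  have shift: "(\<lambda>u. f (u + v)) = (\<lambda>u. f (v + 1 * u))"
    by (simp add: add.commute)
  have "diff_entropy ?\<nu> \<le> (\<integral>u. - ln (f (u + v)) \<partial>?\<nu>)"
  proof (rule diff_entropy_le_cross_entropy[OF \<nu> fin])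
    show "integrable lborel (\<lambda>u. f (u + v))" "(\<integral>u. f (u + v) \<partial>lborel) \<le> 1"
      unfolding shift using f lborel_integrable_real_affine_iff[of 1 f v]
        lborel_integral_real_affine[of 1 f v] by simp_all
    show "integrable ?\<nu> (\<lambda>u. - ln (f (u + v)))"
      using int integrable_cont_part_iff[OF assms(1,2) _ pos] by simp
    show "AE u in ?\<nu>. 0 < f (u + v)"
      using f_pos AE_cont_part_iff[OF assms(1,2) _ pos] by simp
  qed (use f in simp_all)
  then have "prob (U -` (UNIV - D) \<inter> space M) * diff_entropy ?\<nu>
      \<le> prob (U -` (UNIV - D) \<inter> space M) * (\<integral>u. - ln (f (u + v)) \<partial>?\<nu>)"
    using pos by (intro mult_left_mono) auto
  also have "\<dots> = (\<integral>\<omega>. - ln (f (U \<omega> + v)) * indicator (UNIV - D) (U \<omega>) \<partial>M)"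
    using integral_cont_part[OF assms(1,2) _ pos, of "\<lambda>u. - ln (f (u + v))"] by simp
  finally show ?thesis .
qed

lemma absolutely_continuous_cont_partI:
  fixes Z :: "'a \<Rightarrow> real"
  assumes [measurable]: "random_variable borel Z" "S \<in> sets borel"
    and null: "\<And>A. A \<in> null_sets lborel \<Longrightarrow> AE \<omega> in M. Z \<omega> \<notin> S \<longrightarrow> Z \<omega> \<notin> A"
  shows "absolutely_continuous lborel (cont_part M Z S)"
  unfolding absolutely_continuous_def
proof
  fix A :: "real set" assume A: "A \<in> null_sets lborel"
  then have [measurable]: "A \<in> sets borel" by auto
  have "AE x in distr M borel Z. x \<in> UNIV - S \<longrightarrow> x \<notin> A"
    using null[OF A] by (simp add: AE_distr_iff)
  then have "AE x in cont_part M Z S. x \<notin> A"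
    unfolding cont_part_def cond_law_def by (intro AE_uniform_measureI) auto
  then show "A \<in> null_sets (cont_part M Z S)"
    by (simp add: AE_iff_null_sets)
qed

section \<open>Independent summands\<close>

lemma indep_var_sym:
  assumes "indep_var S X T Y"
  shows "indep_var T Y S X"
proof -
  have "\<And>A B. indep_set A B \<Longrightarrow> indep_set B A"
    unfolding indep_sets2_eq by (metis Int_commute mult.commute)
  then show ?thesis using assms unfolding indep_var_eq by blast
qed

lemma AE_indep_var_iff:
  assumes ind: "indep_var S X T Y" and [measurable]: "Measurable.pred (S \<Otimes>\<^sub>M T) P"
  shows "(AE \<omega> in M. P (X \<omega>, Y \<omega>)) \<longleftrightarrow> (AE x in distr M S X. AE y in distr M T Y. P (x, y))"
proof -
  have [measurable]: "random_variable S X" "random_variable T Y"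
    using ind by (auto dest: indep_var_rv1 indep_var_rv2)
  interpret X: prob_space "distr M S X" by (rule prob_space_distr) simp
  interpret Y: prob_space "distr M T Y" by (rule prob_space_distr) simp
  interpret XY: pair_prob_space "distr M S X" "distr M T Y" ..
  have joint: "distr M S X \<Otimes>\<^sub>M distr M T Y = distr M (S \<Otimes>\<^sub>M T) (\<lambda>\<omega>. (X \<omega>, Y \<omega>))"
    using ind by (simp add: indep_var_distribution_eq)
  have "{p \<in> space (S \<Otimes>\<^sub>M T). P p} \<in> sets (S \<Otimes>\<^sub>M T)"
    by measurable
  then have pair: "(AE p in distr M S X \<Otimes>\<^sub>M distr M T Y. P p) \<longleftrightarrow>
      (AE x in distr M S X. AE y in distr M T Y. P (x, y))"
    using XY.AE_pair_iff[of "\<lambda>x y. P (x, y)"] by (simp add: space_pair_measure)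
  have "(AE \<omega> in M. P (X \<omega>, Y \<omega>)) \<longleftrightarrow> (AE p in distr M (S \<Otimes>\<^sub>M T) (\<lambda>\<omega>. (X \<omega>, Y \<omega>)). P p)"
    by (simp add: AE_distr_iff)
  also have "\<dots> \<longleftrightarrow> (AE p in distr M S X \<Otimes>\<^sub>M distr M T Y. P p)"
    by (simp only: joint)
  finally show ?thesis
    unfolding pair .
qed

lemma
  fixes f :: "_ \<Rightarrow> real"
  assumes ind: "indep_var S X T Y" and [measurable]: "f \<in> borel_measurable (S \<Otimes>\<^sub>M T)"
    and int: "integrable M (\<lambda>\<omega>. f (X \<omega>, Y \<omega>))"
  shows AE_integrable_indep_var: "AE x in distr M S X. integrable (distr M T Y) (\<lambda>y. f (x, y))"
    and integrable_indep_var: "integrable (distr M S X) (\<lambda>x. \<integral>y. f (x, y) \<partial>distr M T Y)"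
    and integral_indep_var:
      "(\<integral>\<omega>. f (X \<omega>, Y \<omega>) \<partial>M) = (\<integral>x. \<integral>y. f (x, y) \<partial>distr M T Y \<partial>distr M S X)"
proof -
  have [measurable]: "random_variable S X" "random_variable T Y"
    using ind by (auto dest: indep_var_rv1 indep_var_rv2)
  interpret X: prob_space "distr M S X" by (rule prob_space_distr) simp
  interpret Y: prob_space "distr M T Y" by (rule prob_space_distr) simp
  interpret XY: pair_prob_space "distr M S X" "distr M T Y" ..
  have joint: "distr M S X \<Otimes>\<^sub>M distr M T Y = distr M (S \<Otimes>\<^sub>M T) (\<lambda>\<omega>. (X \<omega>, Y \<omega>))"
    using ind by (simp add: indep_var_distribution_eq)
  have f: "integrable (distr M S X \<Otimes>\<^sub>M distr M T Y) f"
    using int unfolding joint by (simp add: integrable_distr_eq)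
  show "AE x in distr M S X. integrable (distr M T Y) (\<lambda>y. f (x, y))"
    by (rule XY.AE_integrable_fst'[OF f])
  show "integrable (distr M S X) (\<lambda>x. \<integral>y. f (x, y) \<partial>distr M T Y)"
    by (rule XY.integrable_fst'[OF f])
  show "(\<integral>\<omega>. f (X \<omega>, Y \<omega>) \<partial>M) = (\<integral>x. \<integral>y. f (x, y) \<partial>distr M T Y \<partial>distr M S X)"
    unfolding XY.integral_fst'[OF f] joint by (simp add: integral_distr)
qed

lemma AE_add_notin_null_set:
  fixes U V :: "'a \<Rightarrow> real"
  assumes ind: "indep_var borel V borel U" and [measurable]: "D \<in> sets borel"
    and pos: "0 < prob (U -` (UNIV - D) \<inter> space M)"
    and ac: "absolutely_continuous lborel (cont_part M U D)"
    and A: "A \<in> null_sets lborel"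
  shows "AE \<omega> in M. U \<omega> \<notin> D \<longrightarrow> U \<omega> + V \<omega> \<notin> A"
proof -
  have [measurable]: "random_variable borel U" "A \<in> sets borel"
    using ind A by (auto dest: indep_var_rv2 null_setsD2)
  have "AE v in distr M borel V. AE u in distr M borel U. u \<notin> D \<longrightarrow> u + v \<notin> A"
  proof (rule AE_I2)
    fix v
    have "{u. u - (- v) \<in> A} \<in> null_sets lborel"
      using A by (rule null_sets_translation)
    then have "{u. u + v \<in> A} \<in> null_sets (cont_part M U D)"
      using ac by (auto simp: absolutely_continuous_def)
    then have "AE u in cont_part M U D. u + v \<notin> A"
      using AE_not_in by force
    then show "AE u in distr M borel U. u \<notin> D \<longrightarrow> u + v \<notin> A"
      using AE_cont_part_iff[OF _ _ _ pos, of "\<lambda>u. u + v \<notin> A"] by (simp add: AE_distr_iff)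
  qed
  then show ?thesis
    using AE_indep_var_iff[OF ind, of "\<lambda>p. snd p \<notin> D \<longrightarrow> snd p + fst p \<notin> A"] by simp
qed

lemma cont_part_entropy_le_integral_add:
  fixes U V :: "'a \<Rightarrow> real" and f :: "real \<Rightarrow> real"
  assumes ind: "indep_var borel V borel U" and [measurable]: "D \<in> sets borel" "B \<in> sets borel"
    and pos: "0 < prob (U -` (UNIV - D) \<inter> space M)"
    and ac: "absolutely_continuous lborel (cont_part M U D)"
    and fin: "finite_diff_entropy (cont_part M U D)"
    and [measurable]: "f \<in> borel_measurable borel"
    and f: "\<And>x. 0 \<le> f x" "integrable lborel f" "(\<integral>x. f x \<partial>lborel) \<le> 1"
    and int: "integrable M (\<lambda>\<omega>. - ln (f (U \<omega> + V \<omega>)) * indicator (UNIV - D) (U \<omega>) * indicator B (V \<omega>))"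
    and f_pos: "AE \<omega> in M. U \<omega> \<notin> D \<and> V \<omega> \<in> B \<longrightarrow> 0 < f (U \<omega> + V \<omega>)"
  shows "prob (V -` B \<inter> space M) * prob (U -` (UNIV - D) \<inter> space M) * diff_entropy (cont_part M U D)
    \<le> (\<integral>\<omega>. - ln (f (U \<omega> + V \<omega>)) * indicator (UNIV - D) (U \<omega>) * indicator B (V \<omega>) \<partial>M)"
proof -
  have [measurable]: "random_variable borel V" "random_variable borel U"
    using ind by (auto dest: indep_var_rv1 indep_var_rv2)
  interpret V: prob_space "distr M borel V" by (rule prob_space_distr) simp
  define H where "H p = - ln (f (snd p + fst p)) * indicator (UNIV - D) (snd p) * indicator B (fst p)"
    for p :: "real \<times> real"
  have H_meas[measurable]: "H \<in> borel_measurable (borel \<Otimes>\<^sub>M borel)"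
    unfolding H_def by measurable
  have int_H: "integrable M (\<lambda>\<omega>. H (V \<omega>, U \<omega>))"
    using int by (simp add: H_def)
  let ?c = "prob (U -` (UNIV - D) \<inter> space M) * diff_entropy (cont_part M U D)"
  have "AE v in distr M borel V. AE u in distr M borel U. u \<notin> D \<and> v \<in> B \<longrightarrow> 0 < f (u + v)"
    using f_pos AE_indep_var_iff[OF ind, of "\<lambda>p. snd p \<notin> D \<and> fst p \<in> B \<longrightarrow> 0 < f (snd p + fst p)"]
    by simp
  with AE_integrable_indep_var[OF ind H_meas int_H]
  have "AE v in distr M borel V. ?c * indicator B v \<le> (\<integral>u. H (v, u) \<partial>distr M borel U)"
  proof eventually_elim
    case (elim v)
    show ?case
    proof (cases "v \<in> B")
      case True
      have "?c \<le> (\<integral>\<omega>. - ln (f (U \<omega> + v)) * indicator (UNIV - D) (U \<omega>) \<partial>M)"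
      proof (rule cont_part_entropy_le_integral_shift[OF _ _ pos ac fin _ f])
        show "integrable M (\<lambda>\<omega>. - ln (f (U \<omega> + v)) * indicator (UNIV - D) (U \<omega>))"
          using elim(1) True by (simp add: H_def integrable_distr_eq)
        show "AE \<omega> in M. U \<omega> \<notin> D \<longrightarrow> 0 < f (U \<omega> + v)"
          using elim(2) True by (simp add: AE_distr_iff)
      qed simp_all
      then show ?thesis
        using True by (simp add: H_def integral_distr)
    qed (simp add: H_def)
  qed
  then have "(\<integral>v. ?c * indicator B v \<partial>distr M borel V)
      \<le> (\<integral>v. \<integral>u. H (v, u) \<partial>distr M borel U \<partial>distr M borel V)"
    using V.integrable_const_bound[of "indicator B :: real \<Rightarrow> real" 1]
    by (intro integral_mono_AE integrable_indep_var[OF ind H_meas int_H]) auto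
  then show ?thesis
    using integral_indep_var[OF ind H_meas int_H] by (simp add: H_def measure_distr mult_ac)
qed

end

section \<open>Sums of discrete-continuous variables\<close>

lemma null_sets_lborel_sumset:
  assumes "countable A" "countable B"
  shows "sumset A B \<in> null_sets lborel"
proof -
  have "sumset A B = (\<lambda>(a, b). a + b) ` (A \<times> B)"
    by (auto simp: sumset_def)
  then show ?thesis
    using assms by (simp add: countable_imp_null_set_lborel)
qed

context prob_space
begin

lemma discrete_continuousD:
  assumes "discrete_continuous M U D"
  shows "random_variable borel U" "D \<in> sets borel" "countable D"
    and "absolutely_continuous lborel (cont_part M U D)" "0 < prob (U -` (UNIV - D) \<inter> space M)"
proof -
  show U: "random_variable borel U" and "countable D"
    and "absolutely_continuous lborel (cont_part M U D)"
    using assms by (simp_all add: discrete_continuous_def cont_part_def)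
  then show D: "D \<in> sets borel"
    by (metis countable_imp_null_set_lborel null_setsD2 sets_lborel)
  have "U -` (UNIV - D) \<inter> space M = space M - (U -` D \<inter> space M)"
    by auto
  then show "0 < prob (U -` (UNIV - D) \<inter> space M)"
    using assms U D by (simp add: discrete_continuous_def prob_compl)
qed

context
  fixes X Y :: "'a \<Rightarrow> real" and DX DY :: "real set"
  assumes ind: "indep_var borel X borel Y"
    and X: "discrete_continuous M X DX" and Y: "discrete_continuous M Y DY"
begin

lemma sumset_in_sets_borel [measurable]: "sumset DX DY \<in> sets borel"
  using null_sets_lborel_sumset[OF discrete_continuousD(3)[OF X] discrete_continuousD(3)[OF Y]] by auto

lemma AE_add_notin_sumset_iff:
  "AE \<omega> in M. X \<omega> + Y \<omega> \<notin> sumset DX DY \<longleftrightarrow> X \<omega> \<notin> DX \<or> Y \<omega> \<notin> DY"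
proof -
  note X' = discrete_continuousD[OF X] and Y' = discrete_continuousD[OF Y]
  note null = null_sets_lborel_sumset[OF X'(3) Y'(3)]
  show ?thesis
    using AE_add_notin_null_set[OF indep_var_sym[OF ind] X'(2,5,4) null]
      AE_add_notin_null_set[OF ind Y'(2,5,4) null]
    by eventually_elim (auto simp: sumset_def add.commute)
qed

lemma prob_add_notin_sumset:
  "prob ((\<lambda>\<omega>. X \<omega> + Y \<omega>) -` (UNIV - sumset DX DY) \<inter> space M)
    = prob (Y -` (UNIV - DY) \<inter> space M) + prob (X -` (UNIV - DX) \<inter> space M) * prob (Y -` DY \<inter> space M)"
proof -
  note X' = discrete_continuousD[OF X] and Y' = discrete_continuousD[OF Y]
  note [measurable] = X'(1,2) Y'(1,2)
  let ?A = "{\<omega> \<in> space M. Y \<omega> \<in> UNIV - DY}" and ?B = "{\<omega> \<in> space M. X \<omega> \<in> UNIV - DX \<and> Y \<omega> \<in> DY}"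
  have "prob ((\<lambda>\<omega>. X \<omega> + Y \<omega>) -` (UNIV - sumset DX DY) \<inter> space M) = prob (?A \<union> ?B)"
    by (rule measure_eq_AE) (use AE_add_notin_sumset_iff in \<open>auto elim: AE_mp\<close>)
  also have "\<dots> = prob ?A + prob ?B"
    by (rule finite_measure_Union) auto
  also have "prob ?B = prob {\<omega> \<in> space M. X \<omega> \<in> UNIV - DX} * prob {\<omega> \<in> space M. Y \<omega> \<in> DY}"
    using prob_indep_random_variable[OF ind, of "UNIV - DX" DY] by simp
  finally show ?thesis
    by (simp add: vimage_def Int_def conj_commute)
qed

lemma absolutely_continuous_cont_part_add:
  "absolutely_continuous lborel (cont_part M (\<lambda>\<omega>. X \<omega> + Y \<omega>) (sumset DX DY))"
proof -
  note X' = discrete_continuousD[OF X] and Y' = discrete_continuousD[OF Y]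
  note [measurable] = X'(1,2) Y'(1,2)
  show ?thesis
  proof (rule absolutely_continuous_cont_partI)
    fix A :: "real set" assume A: "A \<in> null_sets lborel"
    show "AE \<omega> in M. X \<omega> + Y \<omega> \<notin> sumset DX DY \<longrightarrow> X \<omega> + Y \<omega> \<notin> A"
      using AE_add_notin_sumset_iff AE_add_notin_null_set[OF indep_var_sym[OF ind] X'(2,5,4) A]
        AE_add_notin_null_set[OF ind Y'(2,5,4) A]
      by eventually_elim (auto simp: add.commute)
  qed measurable
qed

lemma cont_part_entropy_add_ge:
  assumes fin_X: "finite_diff_entropy (cont_part M X DX)"
    and fin_Y: "finite_diff_entropy (cont_part M Y DY)"
    and fin_Z: "finite_diff_entropy (cont_part M (\<lambda>\<omega>. X \<omega> + Y \<omega>) (sumset DX DY))"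
  shows "prob (Y -` (UNIV - DY) \<inter> space M) * diff_entropy (cont_part M Y DY)
      + prob (X -` (UNIV - DX) \<inter> space M) * prob (Y -` DY \<inter> space M) * diff_entropy (cont_part M X DX)
    \<le> prob ((\<lambda>\<omega>. X \<omega> + Y \<omega>) -` (UNIV - sumset DX DY) \<inter> space M)
      * diff_entropy (cont_part M (\<lambda>\<omega>. X \<omega> + Y \<omega>) (sumset DX DY))"
    (is "_ \<le> ?pZ * diff_entropy ?\<nu>")
proof -
  note X' = discrete_continuousD[OF X] and Y' = discrete_continuousD[OF Y]
  note [measurable] = X'(1,2) Y'(1,2)
  have pos: "0 < ?pZ"
    using prob_add_notin_sumset X'(5) Y'(5) by (simp add: add_pos_nonneg)
  have \<nu>: "prob_space ?\<nu>" "sets ?\<nu> = sets borel" "absolutely_continuous lborel ?\<nu>"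
    using prob_space_cont_part[OF _ _ pos] absolutely_continuous_cont_part_add by auto
  define f where "f = dens ?\<nu>"
  have f: "f \<in> borel_measurable borel" "\<And>x. 0 \<le> f x" "integrable lborel f" "(\<integral>x. f x \<partial>lborel) \<le> 1"
    using integrable_dens[OF \<nu>] integral_dens_eq_1[OF \<nu>] by (simp_all add: f_def)
  define F where "F = (\<lambda>\<omega>. - ln (f (X \<omega> + Y \<omega>)) * indicator (UNIV - sumset DX DY) (X \<omega> + Y \<omega>))"
  (* The trivial last factor gives T1 the shape of cont_part_entropy_le_integral_add with B = UNIV. *)
  define T1 where "T1 = (\<lambda>\<omega>. - ln (f (Y \<omega> + X \<omega>)) * indicator (UNIV - DY) (Y \<omega>) * indicator UNIV (X \<omega>))"
  define T2 where "T2 = (\<lambda>\<omega>. - ln (f (X \<omega> + Y \<omega>)) * indicator (UNIV - DX) (X \<omega>) * indicator DY (Y \<omega>))"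
  have meas: "F \<in> borel_measurable M" "T1 \<in> borel_measurable M" "T2 \<in> borel_measurable M"
    unfolding F_def T1_def T2_def f_def by measurable
  have int_F: "integrable M F"
    using integrable_neg_ln_dens_cont_part[OF _ _ pos \<nu>(3) fin_Z] by (simp add: F_def f_def)
  have F_eq: "(\<integral>\<omega>. F \<omega> \<partial>M) = ?pZ * diff_entropy ?\<nu>"
    using integral_neg_ln_dens_cont_part[OF _ _ pos \<nu>(3)] by (simp add: F_def f_def)
  have f_pos: "AE \<omega> in M. X \<omega> + Y \<omega> \<notin> sumset DX DY \<longrightarrow> 0 < f (X \<omega> + Y \<omega>)"
    using AE_dens_cont_part_pos[OF _ _ pos \<nu>(3)] by (simp add: f_def)
  have split: "AE \<omega> in M. F \<omega> = T1 \<omega> + T2 \<omega> \<and> norm (T1 \<omega>) \<le> norm (F \<omega>) \<and> norm (T2 \<omega>) \<le> norm (F \<omega>)"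
    using AE_add_notin_sumset_iff
    by eventually_elim (auto simp: F_def T1_def T2_def add.commute split: split_indicator)
  have int_T: "integrable M T1" "integrable M T2"
    using Bochner_Integration.integrable_bound[OF int_F meas(2)]
      Bochner_Integration.integrable_bound[OF int_F meas(3)] split by (auto elim: AE_mp)
  have "(\<integral>\<omega>. F \<omega> \<partial>M) = (\<integral>\<omega>. T1 \<omega> + T2 \<omega> \<partial>M)"
    using split by (intro integral_cong_AE) (auto elim: AE_mp intro: meas borel_measurable_add)
  then have "(\<integral>\<omega>. F \<omega> \<partial>M) = (\<integral>\<omega>. T1 \<omega> \<partial>M) + (\<integral>\<omega>. T2 \<omega> \<partial>M)"
    using int_T by simp
  moreover have "prob (X -` UNIV \<inter> space M) * prob (Y -` (UNIV - DY) \<inter> space M)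
      * diff_entropy (cont_part M Y DY) \<le> (\<integral>\<omega>. T1 \<omega> \<partial>M)"
    unfolding T1_def
    by (rule cont_part_entropy_le_integral_add[OF ind Y'(2) _ Y'(5,4) fin_Y f])
      (use int_T f_pos AE_add_notin_sumset_iff in \<open>auto simp: T1_def add.commute elim: AE_mp\<close>)
  moreover have "prob (Y -` DY \<inter> space M) * prob (X -` (UNIV - DX) \<inter> space M)
      * diff_entropy (cont_part M X DX) \<le> (\<integral>\<omega>. T2 \<omega> \<partial>M)"
    unfolding T2_def
    by (rule cont_part_entropy_le_integral_add[OF indep_var_sym[OF ind] X'(2) _ X'(5,4) fin_X f])
      (use int_T f_pos AE_add_notin_sumset_iff in \<open>auto simp: T2_def elim: AE_mp\<close>)
  ultimately show ?thesis
    using F_eq by (simp add: prob_space mult_ac)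
qed

end

end

theorem mainTheorem15:
  fixes M :: "'a measure" and X Y :: "'a \<Rightarrow> real" and DX DY :: "real set"
  assumes "prob_space M"
    and "prob_space.indep_var M borel X borel Y"
    and "discrete_continuous M X DX"
    and "discrete_continuous M Y DY"
    and "finite_diff_entropy (cont_part M X DX)"
    and "finite_diff_entropy (cont_part M Y DY)"
    and "finite_diff_entropy (cont_part M (\<lambda>\<omega>. X \<omega> + Y \<omega>) (sumset DX DY))"
  shows "diff_entropy (cont_part M (\<lambda>\<omega>. X \<omega> + Y \<omega>) (sumset DX DY))
           \<ge> min (diff_entropy (cont_part M X DX)) (diff_entropy (cont_part M Y DY))"
proof -
  interpret prob_space M by fact
  let ?hX = "diff_entropy (cont_part M X DX)" and ?hY = "diff_entropy (cont_part M Y DY)"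
    and ?hZ = "diff_entropy (cont_part M (\<lambda>\<omega>. X \<omega> + Y \<omega>) (sumset DX DY))"
  let ?wY = "prob (Y -` (UNIV - DY) \<inter> space M)"
    and ?wX = "prob (X -` (UNIV - DX) \<inter> space M) * prob (Y -` DY \<inter> space M)"
  have w: "0 < ?wY" "0 \<le> ?wX"
    using discrete_continuousD(5)[OF assms(4)] by auto
  have "(?wY + ?wX) * min ?hX ?hY \<le> ?wY * ?hY + ?wX * ?hX"
    using w by (simp add: distrib_right add_mono mult_left_mono)
  also have "\<dots> \<le> (?wY + ?wX) * ?hZ"
    using cont_part_entropy_add_ge[OF assms(2-7)] prob_add_notin_sumset[OF assms(2-4)]
    by (simp add: mult_ac)
  finally show ?thesis
    using w by (simp add: mult_le_cancel_left_pos add_pos_nonneg)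
qed

end
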